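(* Let $(M,w)$ be an oriented Poisson manifold, $g$ a Riemannian metric on $M$, $dV_g=\sqrt{\det g}\,dx^1\wedge\cdots\wedge dx^n$, and $\Phi=(\det g)\,dx^1\wedge\cdots\wedge dx^n\wedge dy^1\wedge\cdots\wedge dy^n$, a volume form on $TM$. Then the modular vector field of $(TM,w^C,\Phi)$ is $$\Delta^{TM}_\Phi=2\,(\Delta^M_{dV_g})^V,$$ where $\Delta^M_{dV_g}=\sum_k\left(\frac{\partial w^{ik}}{\partial x^k}+w^{ik}\frac{\partial\ln\sqrt{\det g}}{\partial x^k}\right)\frac{\partial}{\partial x^i}$ is the modular vector field of $(M,w,dV_g)$.
   Context: Coordinates $(x^i)$ on $M$, induced coordinates $(x^i,y^i)$ on $TM$. $w=\frac12w^{ij}\partial_{x^i}\wedge\partial_{x^j}$ and its complete lift $w^C=w^{ij}\partial_{x^i}\wedge\partial_{y^j}+\frac12y^k\frac{\partial w^{ij}}{\partial x^k}\partial_{y^i}\wedge\partial_{y^j}$. For a Poisson manifold $(N,\Pi)$ with volume form $\mu$, the Hamiltonian vector field is $X_f=\{f,\cdot\}_\Pi$ (on $M$: $X_f=\frac{\partial f}{\partial x^i}w^{ij}\partial_{x^j}$), the divergence is defined by $\mathcal L_X\mu=(\mathrm{div}_\mu X)\mu$, and the modular vector field $\Delta_\mu$ is the vector field $f\mapsto\mathrm{div}_\mu X_f$. The vertical lift of $X=X^i\partial_{x^i}$ is $X^V=X^i\partial_{y^i}$. *)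

theory Defs
  imports "HOL-Analysis.Analysis"
begin

text \<open>A coordinate domain is an open set of real^'i;
 functions are real valued; vector fields are given by their component vectors;
 bivectors by their (skew) coefficient matrices, P x $ a $ b = Pi^{ab}, so that
 Pi = 1/2 Pi^{ab} d_a wedge d_b and {f,h} = Pi^{ab} d_a f d_b h.\<close>

definition partial :: "'i::finite \<Rightarrow> (real^'i \<Rightarrow> real) \<Rightarrow> real^'i \<Rightarrow> real" where
  "partial i f x = deriv (\<lambda>t. f (x + t *\<^sub>R axis i 1)) 0"

fun iter_partial :: "'i::finite list \<Rightarrow> (real^'i \<Rightarrow> real) \<Rightarrow> real^'i \<Rightarrow> real" where
  "iter_partial [] f = f"
| "iter_partial (i # is) f = partial i (iter_partial is f)"

definition smooth_on :: "(real^'i::finite) set \<Rightarrow> (real^'i \<Rightarrow> real) \<Rightarrow> bool" where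
  "smooth_on U f \<longleftrightarrow> (\<forall>is. iter_partial is f differentiable_on U)"

definition vf_apply :: "(real^'i::finite \<Rightarrow> real^'i) \<Rightarrow> (real^'i \<Rightarrow> real) \<Rightarrow> real^'i \<Rightarrow> real" where
  "vf_apply X f x = (\<Sum>a\<in>UNIV. X x $ a * partial a f x)"

text \<open>Hamiltonian vector field X_f = {f, .} = d_a f Pi^{ab} d_b.\<close>
definition ham_vf :: "(real^'i::finite \<Rightarrow> real^'i^'i) \<Rightarrow> (real^'i \<Rightarrow> real) \<Rightarrow> real^'i \<Rightarrow> real^'i" where
  "ham_vf P f x = (\<chi> b. \<Sum>a\<in>UNIV. partial a f x * P x $ a $ b)"

text \<open>Divergence w.r.t. the volume form rho dx^1 ... dx^m (rho > 0):
  L_X(rho dx) = (sum_b d_b(rho X^b)) dx.\<close>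
definition divergence :: "(real^'i::finite \<Rightarrow> real) \<Rightarrow> (real^'i \<Rightarrow> real^'i) \<Rightarrow> real^'i \<Rightarrow> real" where
  "divergence \<rho> X x = (\<Sum>b\<in>UNIV. partial b (\<lambda>z. \<rho> z * X z $ b) x) / \<rho> x"

definition modular_vf :: "(real^'i::finite \<Rightarrow> real^'i^'i) \<Rightarrow> (real^'i \<Rightarrow> real) \<Rightarrow> (real^'i \<Rightarrow> real) \<Rightarrow> real^'i \<Rightarrow> real" where
  "modular_vf P \<rho> f x = divergence \<rho> (ham_vf P f) x"

definition poisson_on :: "(real^'i::finite) set \<Rightarrow> (real^'i \<Rightarrow> real^'i^'i) \<Rightarrow> bool" where
  "poisson_on U P \<longleftrightarrow>
     (\<forall>a b. smooth_on U (\<lambda>x. P x $ a $ b)) \<and>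
     (\<forall>x\<in>U. \<forall>a b. P x $ a $ b = - P x $ b $ a) \<and>
     (\<forall>x\<in>U. \<forall>a b c. (\<Sum>l\<in>UNIV.
         P x $ l $ a * partial l (\<lambda>z. P z $ b $ c) x
       + P x $ l $ b * partial l (\<lambda>z. P z $ c $ a) x
       + P x $ l $ c * partial l (\<lambda>z. P z $ a $ b) x) = 0)"

definition riemannian_metric_on :: "(real^'i::finite) set \<Rightarrow> (real^'i \<Rightarrow> real^'i^'i) \<Rightarrow> bool" where
  "riemannian_metric_on U g \<longleftrightarrow>
     (\<forall>a b. smooth_on U (\<lambda>x. g x $ a $ b)) \<and>
     (\<forall>x\<in>U. transpose (g x) = g x \<and> (\<forall>v. v \<noteq> 0 \<longrightarrow> v \<bullet> (g x *v v) > 0))"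

text \<open>Induced coordinates on TM: p $ Inl i = x^i, p $ Inr i = y^i.\<close>
definition xpart :: "real^('n::finite + 'n) \<Rightarrow> real^'n" where
  "xpart p = (\<chi> i. p $ Inl i)"

definition ypart :: "real^('n::finite + 'n) \<Rightarrow> real^'n" where
  "ypart p = (\<chi> i. p $ Inr i)"

text \<open>Complete lift w^C = w^{ij} d_{x^i} wedge d_{y^j} + 1/2 y^k d_k w^{ij} d_{y^i} wedge d_{y^j},
  as a skew coefficient matrix on TM.\<close>
definition complete_lift :: "(real^'n::finite \<Rightarrow> real^'n^'n) \<Rightarrow> real^('n + 'n) \<Rightarrow> real^('n + 'n)^('n + 'n)" where
  "complete_lift w p = (\<chi> a b. case (a, b) of
       (Inl i, Inr j) \<Rightarrow> w (xpart p) $ i $ j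
     | (Inr j, Inl i) \<Rightarrow> - w (xpart p) $ i $ j
     | (Inr i, Inr j) \<Rightarrow> (\<Sum>k\<in>UNIV. ypart p $ k * partial k (\<lambda>z. w z $ i $ j) (xpart p))
     | (Inl i, Inl j) \<Rightarrow> 0)"

definition vertical_lift :: "(real^'n::finite \<Rightarrow> real^'n) \<Rightarrow> real^('n + 'n) \<Rightarrow> real^('n + 'n)" where
  "vertical_lift X p = (\<chi> a. case a of Inl i \<Rightarrow> 0 | Inr i \<Rightarrow> X (xpart p) $ i)"

end

theory Submission
  imports Defs
begin

(* In coordinates, div_rho X_f = sum_a d_a f (d_b P^ab + P^ab d_b rho / rho): the terms with
  second derivatives of f cancel, since the Hessian of f is symmetric and P is skew.  For the
  complete lift w^C and Phi = det g o pi no horizontal component survives, because w^C has no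
  x-x block, while its x-y block and Phi do not depend on y.  In the vertical component i the
  y-x block -w^ji(x) contributes d_j w^ij + w^ij d_j (ln det g), and the y-y block
  y^k d_k w^ij contributes d_j w^ij once more; as ln det g = 2 ln sqrt (det g), this is twice
  the i-th component of the modular field of (w, dV_g). *)

lemma has_real_derivative_along_line:
  fixes f :: "'a::real_normed_vector \<Rightarrow> real"
  assumes "(f has_derivative F) (at (y + s *\<^sub>R u))"
  shows "((\<lambda>t. f (y + t *\<^sub>R u)) has_real_derivative F u) (at s)"
proof -
  have line: "((\<lambda>t. y + t *\<^sub>R u) has_derivative (\<lambda>t. t *\<^sub>R u)) (at s)"
    by (auto intro!: derivative_eq_intros)
  have "((\<lambda>t. f (y + t *\<^sub>R u)) has_derivative (\<lambda>t. F (t *\<^sub>R u))) (at s)"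
    using has_derivative_compose[OF line assms] .
  moreover have "bounded_linear F"
    using assms has_derivative_bounded_linear by blast
  ultimately show ?thesis
    by (intro has_derivative_imp_has_field_derivative) (auto simp: linear_simps)
qed

lemma partial_eq_derivative:
  fixes f :: "real^'i::finite \<Rightarrow> real"
  assumes "(f has_derivative f') (at x)"
  shows "partial i f x = f' (axis i 1)"
  unfolding partial_def
  using has_real_derivative_along_line[of f f' x 0 "axis i 1"] assms
  by (intro DERIV_imp_deriv) simp

lemma partial_cong_ev:
  fixes f g :: "real^'i::finite \<Rightarrow> real"
  assumes "eventually (\<lambda>z. f z = g z) (nhds x)"
  shows "partial i f x = partial i g x"
proof -
  have "filterlim (\<lambda>t::real. x + t *\<^sub>R axis i 1) (nhds x) (nhds 0)"
    by (auto intro!: tendsto_eq_intros filterlim_ident)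
  then show ?thesis
    unfolding partial_def using assms
    by (intro deriv_cong_ev) (auto dest: eventually_compose_filterlim)
qed

lemma partial_const: "partial i (\<lambda>z::real^'i::finite. c) x = 0"
  unfolding partial_def by simp

lemma partial_minus:
  fixes f :: "real^'i::finite \<Rightarrow> real"
  assumes "f differentiable (at x)"
  shows "partial i (\<lambda>z. - f z) x = - partial i f x"
proof -
  obtain F where "(f has_derivative F) (at x)"
    using assms differentiable_def by blast
  then show ?thesis
    using partial_eq_derivative has_derivative_minus by metis
qed

lemma partial_mult:
  fixes f g :: "real^'i::finite \<Rightarrow> real"
  assumes "f differentiable (at x)" "g differentiable (at x)"
  shows "partial i (\<lambda>z. f z * g z) x = f x * partial i g x + partial i f x * g x"
proof -
  obtain F G where F: "(f has_derivative F) (at x)" and G: "(g has_derivative G) (at x)"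
    using assms differentiable_def by blast
  show ?thesis
    using partial_eq_derivative[OF has_derivative_mult[OF F G]]
      partial_eq_derivative[OF F] partial_eq_derivative[OF G] by simp
qed

lemma partial_sum:
  fixes f :: "'a \<Rightarrow> real^'i::finite \<Rightarrow> real"
  assumes "\<And>a. a \<in> A \<Longrightarrow> f a differentiable (at x)"
  shows "partial i (\<lambda>z. \<Sum>a\<in>A. f a z) x = (\<Sum>a\<in>A. partial i (f a) x)"
proof -
  define F where "F a = frechet_derivative (f a) (at x)" for a
  have F: "(f a has_derivative F a) (at x)" if "a \<in> A" for a
    unfolding F_def using assms[OF that] frechet_derivative_works by blast
  show ?thesis
    using partial_eq_derivative[OF has_derivative_sum[OF F]] partial_eq_derivative[OF F] by simp
qed

lemma partial_coordinate:
  "partial b (\<lambda>z. z $ a) (p :: real^'i::finite) = (if b = a then 1 else 0)"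
proof -
  have "((\<lambda>z. z $ a) has_derivative (\<lambda>z. z $ a)) (at p)"
    using bounded_linear_vec_nth by (rule bounded_linear_imp_has_derivative)
  then show ?thesis
    by (auto simp: partial_eq_derivative axis_def)
qed

lemma differentiable_coordinate: "(\<lambda>z. z $ a) differentiable (at (p :: real^'i::finite))"
  using bounded_linear_imp_has_derivative[OF bounded_linear_vec_nth] unfolding differentiable_def by blast

lemma partial_chain:
  fixes D :: "real^'i::finite \<Rightarrow> real"
  assumes "D differentiable (at x)" "(\<phi> has_real_derivative c) (at (D x))"
  shows "partial i (\<lambda>z. \<phi> (D z)) x = partial i D x * c"
proof -
  obtain F where F: "(D has_derivative F) (at x)"
    using assms differentiable_def by blast
  show ?thesis
    using partial_eq_derivative[OF DERIV_compose_FDERIV[OF assms(2) F]] partial_eq_derivative[OF F]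
    by simp
qed

lemma differentiable_chain:
  fixes D :: "real^'i::finite \<Rightarrow> real"
  assumes "D differentiable (at x)" "(\<phi> has_real_derivative c) (at (D x))"
  shows "(\<lambda>z. \<phi> (D z)) differentiable (at x)"
  using assms DERIV_compose_FDERIV unfolding differentiable_def by blast

lemma partial_ln:
  fixes \<rho> :: "real^'i::finite \<Rightarrow> real"
  assumes "\<rho> differentiable (at x)" "\<rho> x > 0"
  shows "partial k (\<lambda>z. ln (\<rho> z)) x = partial k \<rho> x / \<rho> x"
  using partial_chain[OF assms(1) DERIV_ln_divide[OF assms(2)]] by simp

lemma differentiable_sqrt:
  fixes D :: "real^'i::finite \<Rightarrow> real"
  assumes "D differentiable (at x)" "D x > 0"
  shows "(\<lambda>z. sqrt (D z)) differentiable (at x)"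
  using differentiable_chain[OF assms(1) DERIV_real_sqrt[OF assms(2)]] .

lemma partial_sqrt_div_sqrt:
  fixes D :: "real^'i::finite \<Rightarrow> real"
  assumes "D differentiable (at x)" "D x > 0"
  shows "partial k (\<lambda>z. sqrt (D z)) x / sqrt (D x) = partial k D x / (2 * D x)"
proof -
  have "partial k (\<lambda>z. sqrt (D z)) x / sqrt (D x) = partial k D x * (inverse (sqrt (D x)) / 2) / sqrt (D x)"
    by (simp add: partial_chain[OF assms(1) DERIV_real_sqrt[OF assms(2)]])
  also have "\<dots> = partial k D x / (2 * (sqrt (D x) * sqrt (D x)))"
    by (simp add: field_simps)
  finally show ?thesis
    using assms(2) by simp
qed

section \<open>Symmetry of second partial derivatives\<close>

definition second_difference :: "('a::real_vector \<Rightarrow> real) \<Rightarrow> 'a \<Rightarrow> 'a \<Rightarrow> 'a \<Rightarrow> real \<Rightarrow> real" where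
  "second_difference f x u v h = f (x + h *\<^sub>R u + h *\<^sub>R v) - f (x + h *\<^sub>R u) - f (x + h *\<^sub>R v) + f x"

lemma second_difference_commute: "second_difference f x u v h = second_difference f x v u h"
  by (simp add: second_difference_def add_ac)

lemma second_difference_mean_value:
  fixes f :: "'a::real_normed_vector \<Rightarrow> real"
  assumes f_deriv: "\<And>z. z \<in> S \<Longrightarrow> (f has_derivative F z) (at z)"
    and h: "0 < h"
    and segments: "\<And>s. 0 \<le> s \<Longrightarrow> s \<le> h \<Longrightarrow> x + s *\<^sub>R u \<in> S \<and> x + s *\<^sub>R u + h *\<^sub>R v \<in> S"
  obtains \<xi> where "0 < \<xi>" "\<xi> < h"
    "second_difference f x u v h = h * (F (x + \<xi> *\<^sub>R u + h *\<^sub>R v) u - F (x + \<xi> *\<^sub>R u) u)"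
proof -
  define \<phi> where "\<phi> s = f (x + h *\<^sub>R v + s *\<^sub>R u) - f (x + s *\<^sub>R u)" for s
  have "(\<phi> has_real_derivative F (x + s *\<^sub>R u + h *\<^sub>R v) u - F (x + s *\<^sub>R u) u) (at s)"
    if "0 \<le> s" "s \<le> h" for s
    unfolding \<phi>_def using segments[OF that] f_deriv
    by (intro DERIV_diff has_real_derivative_along_line) (auto simp: add_ac)
  then obtain \<xi> where "0 < \<xi>" "\<xi> < h"
      "\<phi> h - \<phi> 0 = (h - 0) * (F (x + \<xi> *\<^sub>R u + h *\<^sub>R v) u - F (x + \<xi> *\<^sub>R u) u)"
    using MVT2[of 0 h \<phi> "\<lambda>s. F (x + s *\<^sub>R u + h *\<^sub>R v) u - F (x + s *\<^sub>R u) u"] h by auto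
  moreover have "\<phi> h - \<phi> 0 = second_difference f x u v h"
    by (simp add: \<phi>_def second_difference_def add_ac)
  ultimately show ?thesis using that by simp
qed

lemma second_difference_estimate:
  fixes f :: "'a::real_normed_vector \<Rightarrow> real"
  assumes f_deriv: "\<And>z. z \<in> S \<Longrightarrow> (f has_derivative F z) (at z)"
    and gu: "\<And>z. z \<in> S \<Longrightarrow> gu z = F z u"
    and Du: "linear Du" and \<epsilon>: "0 \<le> \<epsilon>"
    and remainder: "\<And>c. norm c < r \<Longrightarrow> x + c \<in> S \<and> \<bar>gu (x + c) - gu x - Du c\<bar> \<le> \<epsilon> * norm c"
    and h: "0 < h" "h * (norm u + norm v) < r"
  shows "\<bar>second_difference f x u v h / h\<^sup>2 - Du v\<bar> \<le> 2 * \<epsilon> * (norm u + norm v)"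
proof -
  have near: "norm (s *\<^sub>R u + t *\<^sub>R v) \<le> h * (norm u + norm v)"
    if "0 \<le> s" "s \<le> h" "0 \<le> t" "t \<le> h" for s t
  proof -
    have "norm (s *\<^sub>R u + t *\<^sub>R v) \<le> s * norm u + t * norm v"
      using norm_triangle_ineq[of "s *\<^sub>R u" "t *\<^sub>R v"] that by simp
    also have "\<dots> \<le> h * (norm u + norm v)"
      using that by (simp add: distrib_left add_mono mult_right_mono)
    finally show ?thesis .
  qed
  have approx: "x + c \<in> S \<and> \<bar>gu (x + c) - gu x - Du c\<bar> \<le> \<epsilon> * (h * (norm u + norm v))"
    if "c = s *\<^sub>R u + t *\<^sub>R v" "0 \<le> s" "s \<le> h" "0 \<le> t" "t \<le> h" for c s t
  proof -
    have small: "norm c \<le> h * (norm u + norm v)"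
      using near[OF that(2-)] that(1) by simp
    then have "norm c < r"
      using h(2) by simp
    then show ?thesis
      using remainder[of c] mult_left_mono[OF small \<epsilon>] by auto
  qed
  have segments: "x + s *\<^sub>R u \<in> S \<and> x + s *\<^sub>R u + h *\<^sub>R v \<in> S" if "0 \<le> s" "s \<le> h" for s
    using approx[of "s *\<^sub>R u + 0 *\<^sub>R v" s 0] approx[of "s *\<^sub>R u + h *\<^sub>R v" s h] that h
    by (simp add: add.assoc)
  obtain \<xi> where \<xi>: "0 < \<xi>" "\<xi> < h"
    and mv: "second_difference f x u v h = h * (F (x + \<xi> *\<^sub>R u + h *\<^sub>R v) u - F (x + \<xi> *\<^sub>R u) u)"
    by (rule second_difference_mean_value[OF f_deriv h(1) segments])
  define a where "a = \<xi> *\<^sub>R u + h *\<^sub>R v"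
  define b where "b = \<xi> *\<^sub>R u + 0 *\<^sub>R v"
  have "F (x + \<xi> *\<^sub>R u + h *\<^sub>R v) u = gu (x + a)" "F (x + \<xi> *\<^sub>R u) u = gu (x + b)"
    using gu segments[of \<xi>] \<xi> by (auto simp: a_def b_def add.assoc)
  moreover have "Du a - Du b = h * Du v"
    by (simp add: a_def b_def linear_add[OF Du] linear_scale[OF Du])
  ultimately have "second_difference f x u v h / h\<^sup>2 - Du v
      = ((gu (x + a) - gu x - Du a) - (gu (x + b) - gu x - Du b)) / h"
    using h by (simp add: mv power2_eq_square divide_simps) (simp add: algebra_simps)
  then have "\<bar>second_difference f x u v h / h\<^sup>2 - Du v\<bar>
      \<le> (\<bar>gu (x + a) - gu x - Du a\<bar> + \<bar>gu (x + b) - gu x - Du b\<bar>) / h"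
    using h by (simp add: divide_right_mono)
  also have "\<dots> \<le> 2 * (\<epsilon> * (h * (norm u + norm v))) / h"
    using approx[OF a_def] approx[OF b_def] \<xi> h by (intro divide_right_mono) auto
  also have "\<dots> = 2 * \<epsilon> * (norm u + norm v)"
    using h by simp
  finally show ?thesis .
qed

lemma second_difference_tendsto:
  fixes f :: "'a::real_normed_vector \<Rightarrow> real"
  assumes S: "open S" "x \<in> S"
    and f_deriv: "\<And>z. z \<in> S \<Longrightarrow> (f has_derivative F z) (at z)"
    and gu: "\<And>z. z \<in> S \<Longrightarrow> gu z = F z u"
    and Du: "(gu has_derivative Du) (at x)"
  shows "((\<lambda>h. second_difference f x u v h / h\<^sup>2) \<longlongrightarrow> Du v) (at_right 0)"
proof (rule tendstoI)
  fix e :: real assume e: "e > 0"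
  define K where "K = norm u + norm v + 1"
  have K: "K > 0" "norm u + norm v \<le> K"
    unfolding K_def by (simp_all add: add_nonneg_pos)
  define \<epsilon> where "\<epsilon> = e / (4 * K)"
  have \<epsilon>: "\<epsilon> > 0"
    unfolding \<epsilon>_def using e K by simp
  obtain r0 where r0: "r0 > 0" "ball x r0 \<subseteq> S"
    using S openE by blast
  obtain d where d: "d > 0"
    "\<And>y. norm (y - x) < d \<Longrightarrow> \<bar>gu y - gu x - Du (y - x)\<bar> \<le> \<epsilon> * norm (y - x)"
    using Du[unfolded has_derivative_at_alt] \<epsilon> by (metis real_norm_def)
  have remainder: "x + c \<in> S \<and> \<bar>gu (x + c) - gu x - Du c\<bar> \<le> \<epsilon> * norm c"
    if "norm c < min r0 d" for c
  proof -
    have "norm c < r0" "norm c < d"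
      using that by auto
    then show ?thesis
      using r0(2) d(2)[of "x + c"] by (auto simp: dist_norm)
  qed
  have "\<bar>second_difference f x u v h / h\<^sup>2 - Du v\<bar> < e" if h: "0 < h" "h < min r0 d / K" for h
  proof -
    have "h * (norm u + norm v) \<le> h * K"
      using h K by (intro mult_left_mono) auto
    also have "\<dots> < min r0 d"
      using h K by (simp add: pos_less_divide_eq mult.commute)
    finally have "h * (norm u + norm v) < min r0 d" .
    then have "\<bar>second_difference f x u v h / h\<^sup>2 - Du v\<bar> \<le> 2 * \<epsilon> * (norm u + norm v)"
      using h \<epsilon> Du has_derivative_linear
      by (intro second_difference_estimate[where r = "min r0 d", OF f_deriv gu _ _ remainder]) auto
    also have "\<dots> = e / 2 * ((norm u + norm v) / K)"
      using K by (simp add: \<epsilon>_def)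
    also have "\<dots> \<le> e / 2 * 1"
      using e K by (intro mult_left_mono) simp_all
    finally show ?thesis
      using e by simp
  qed
  moreover have "min r0 d / K > 0"
    using r0 d K by simp
  ultimately show "\<forall>\<^sub>F h in at_right 0. dist (second_difference f x u v h / h\<^sup>2) (Du v) < e"
    unfolding eventually_at_right_field dist_real_def by force
qed

lemma directional_derivatives_commute:
  fixes f :: "'a::real_normed_vector \<Rightarrow> real"
  assumes "open S" "x \<in> S"
    and f_deriv: "\<And>z. z \<in> S \<Longrightarrow> (f has_derivative F z) (at z)"
    and "\<And>z. z \<in> S \<Longrightarrow> gu z = F z u" "(gu has_derivative Du) (at x)"
    and "\<And>z. z \<in> S \<Longrightarrow> gv z = F z v" "(gv has_derivative Dv) (at x)"
  shows "Du v = Dv u"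
proof (rule tendsto_unique[OF trivial_limit_at_right_real])
  show "((\<lambda>h. second_difference f x u v h / h\<^sup>2) \<longlongrightarrow> Du v) (at_right 0)"
    using assms by (intro second_difference_tendsto)
  show "((\<lambda>h. second_difference f x u v h / h\<^sup>2) \<longlongrightarrow> Dv u) (at_right 0)"
    unfolding second_difference_commute[of f x u] using assms by (intro second_difference_tendsto)
qed

lemma partial_commute:
  fixes f :: "real^'i::finite \<Rightarrow> real"
  assumes "open S" "x \<in> S"
    and f_diff: "\<And>z. z \<in> S \<Longrightarrow> f differentiable (at z)"
    and "partial i f differentiable (at x)" "partial j f differentiable (at x)"
  shows "partial j (partial i f) x = partial i (partial j f) x"
proof -
  define F where "F z = frechet_derivative f (at z)" for z
  have F: "(f has_derivative F z) (at z)" if "z \<in> S" for z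
    unfolding F_def using f_diff[OF that] frechet_derivative_works by blast
  obtain Di Dj where Di: "(partial i f has_derivative Di) (at x)"
    and Dj: "(partial j f has_derivative Dj) (at x)"
    using assms(4,5) differentiable_def by blast
  have "Di (axis j 1) = Dj (axis i 1)"
    by (rule directional_derivatives_commute[OF assms(1,2) F _ Di _ Dj])
      (auto intro: partial_eq_derivative F)
  then show ?thesis
    using partial_eq_derivative[OF Di] partial_eq_derivative[OF Dj] by simp
qed

lemma differentiable_det:
  fixes M :: "'a::real_normed_vector \<Rightarrow> real^'n::finite^'n"
  assumes "\<And>i j. (\<lambda>z. M z $ i $ j) differentiable (at x within S)"
  shows "(\<lambda>z. det (M z)) differentiable (at x within S)"
proof -
  have "(\<lambda>z. \<Prod>i\<in>UNIV. M z $ i $ p i) differentiable (at x within S)" for p :: "'n \<Rightarrow> 'n"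
  proof -
    define F where "F i = frechet_derivative (\<lambda>z. M z $ i $ p i) (at x within S)" for i
    have "((\<lambda>z. M z $ i $ p i) has_derivative F i) (at x within S)" for i
      unfolding F_def using assms frechet_derivative_works by blast
    then have "((\<lambda>z. \<Prod>i\<in>UNIV. M z $ i $ p i) has_derivative
        (\<lambda>y. \<Sum>i\<in>UNIV. F i y * (\<Prod>j\<in>UNIV - {i}. M x $ j $ p j))) (at x within S)"
      by (intro has_derivative_prod) auto
    then show ?thesis
      unfolding differentiable_def by blast
  qed
  then show ?thesis
    unfolding det_def by (intro differentiable_sum differentiable_mult differentiable_const) auto
qed

lemma det_nonzero_if_pos_def:
  fixes A :: "real^'n::finite^'n"
  assumes "\<forall>v. v \<noteq> 0 \<longrightarrow> v \<bullet> (A *v v) > 0"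
  shows "det A \<noteq> 0"
proof -
  have "inj ((*v) A)"
  proof (rule injI)
    fix a b assume "A *v a = A *v b"
    then have "A *v (a - b) = 0" by (simp add: matrix_vector_mult_diff_distrib)
    then show "a = b" using assms[rule_format, of "a - b"] by (cases "a - b = 0") auto
  qed
  then show ?thesis
    using det_nz_iff_inj[OF matrix_vector_mul_linear[of A]] by (simp add: matrix_of_matrix_vector_mul)
qed

lemma det_pos_if_pos_def:
  fixes G :: "real^'n::finite^'n"
  assumes pos_def: "\<forall>v. v \<noteq> 0 \<longrightarrow> v \<bullet> (G *v v) > 0"
  shows "det G > 0"
proof (rule ccontr)
  assume "\<not> det G > 0"
  define M where "M t = t *\<^sub>R mat 1 + (1 - t) *\<^sub>R G" for t :: real
  have "continuous_on {0..1} (\<lambda>t. det (M t))"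
    unfolding M_def
    by (intro differentiable_imp_continuous_on differentiable_on_def[THEN iffD2] ballI differentiable_det)
      (simp add: mat_def)
  then obtain t where t: "0 \<le> t" "t \<le> 1" "det (M t) = 0"
    using IVT'[of "\<lambda>t. det (M t)" 0 0 1] \<open>\<not> det G > 0\<close> by (auto simp: M_def)
  have "v \<bullet> (M t *v v) > 0" if "v \<noteq> 0" for v
  proof -
    have "v \<bullet> (M t *v v) = t * (v \<bullet> v) + (1 - t) * (v \<bullet> (G *v v))"
      unfolding M_def
      by (simp add: matrix_vector_mult_add_rdistrib scaleR_matrix_vector_assoc[symmetric] inner_add_right)
    moreover have "v \<bullet> v > 0" "v \<bullet> (G *v v) > 0"
      using that pos_def by auto
    ultimately show ?thesis
      using t by (cases "t = 0") (simp_all add: add_pos_nonneg)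
  qed
  then show False
    using det_nonzero_if_pos_def t(3) by blast
qed

section \<open>The modular vector field in coordinates\<close>

lemma sum_symmetric_skew_eq_0:
  fixes S A :: "'a \<Rightarrow> 'a \<Rightarrow> real"
  assumes "\<And>i j. i \<in> I \<Longrightarrow> j \<in> I \<Longrightarrow> S i j = S j i"
    and "\<And>i j. i \<in> I \<Longrightarrow> j \<in> I \<Longrightarrow> A i j = - A j i"
  shows "(\<Sum>i\<in>I. \<Sum>j\<in>I. S i j * A i j) = 0"
proof -
  have "(\<Sum>i\<in>I. \<Sum>j\<in>I. S i j * A i j) = (\<Sum>j\<in>I. \<Sum>i\<in>I. S i j * A i j)"
    by (rule sum.swap)
  also have "\<dots> = (\<Sum>j\<in>I. \<Sum>i\<in>I. - (S j i * A j i))"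
  proof (intro sum.cong refl)
    fix j i assume "j \<in> I" "i \<in> I"
    then show "S i j * A i j = - (S j i * A j i)"
      using assms(1)[of i j] assms(2)[of i j] by simp
  qed
  also have "\<dots> = - (\<Sum>i\<in>I. \<Sum>j\<in>I. S i j * A i j)"
    by (simp add: sum_negf)
  finally show ?thesis
    by simp
qed

definition modular_field :: "(real^'i::finite \<Rightarrow> real^'i^'i) \<Rightarrow> (real^'i \<Rightarrow> real) \<Rightarrow> real^'i \<Rightarrow> real^'i" where
  "modular_field P \<rho> x =
     (\<chi> a. \<Sum>b\<in>UNIV. partial b (\<lambda>z. P z $ a $ b) x + P x $ a $ b * partial b \<rho> x / \<rho> x)"

lemma vf_apply_cong:
  assumes "X x = Y x"
  shows "vf_apply X f x = vf_apply Y f x"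
  using assms unfolding vf_apply_def by simp

lemma modular_vf_eq_vf_apply:
  fixes P :: "real^'i::finite \<Rightarrow> real^'i^'i"
  assumes S: "open S" "x \<in> S"
    and skew: "\<And>a b. P x $ a $ b = - P x $ b $ a"
    and P_diff: "\<And>a b. (\<lambda>z. P z $ a $ b) differentiable (at x)"
    and \<rho>_diff: "\<rho> differentiable (at x)" and \<rho>_nz: "\<rho> x \<noteq> 0"
    and f_diff: "\<And>z. z \<in> S \<Longrightarrow> f differentiable (at z)"
    and df_diff: "\<And>a. partial a f differentiable (at x)"
  shows "modular_vf P \<rho> f x = vf_apply (modular_field P \<rho>) f x"
proof -
  define H where "H b z = (\<Sum>a\<in>UNIV. partial a f z * P z $ a $ b)" for b z
  have H_diff: "H b differentiable (at x)" for b
    unfolding H_def by (intro differentiable_sum ballI differentiable_mult df_diff P_diff finite)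
  have dH: "partial b (H b) x = (\<Sum>a\<in>UNIV. partial a f x * partial b (\<lambda>z. P z $ a $ b) x)
      + (\<Sum>a\<in>UNIV. partial b (partial a f) x * P x $ a $ b)" for b
    unfolding H_def
    by (simp add: partial_sum partial_mult df_diff P_diff differentiable_mult sum.distrib)
  have hessian_term: "(\<Sum>b\<in>UNIV. \<Sum>a\<in>UNIV. partial b (partial a f) x * P x $ a $ b) = 0"
    using skew by (intro sum_symmetric_skew_eq_0 partial_commute[OF S f_diff df_diff df_diff])
  have "modular_vf P \<rho> f x = (\<Sum>b\<in>UNIV. \<rho> x * partial b (H b) x + partial b \<rho> x * H b x) / \<rho> x"
    unfolding modular_vf_def divergence_def ham_vf_def H_def[symmetric]
    by (simp add: partial_mult[OF \<rho>_diff H_diff])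
  also have "\<dots> = (\<Sum>b\<in>UNIV. partial b (H b) x + partial b \<rho> x * H b x / \<rho> x)"
    using \<rho>_nz by (simp add: sum_divide_distrib add_divide_distrib)
  also have "\<dots> = (\<Sum>b\<in>UNIV. \<Sum>a\<in>UNIV. partial a f x *
      (partial b (\<lambda>z. P z $ a $ b) x + P x $ a $ b * partial b \<rho> x / \<rho> x))"
    unfolding dH sum.distrib hessian_term
    by (simp add: H_def algebra_simps sum_distrib_left sum_divide_distrib sum.distrib)
  also have "\<dots> = vf_apply (modular_field P \<rho>) f x"
    unfolding vf_apply_def modular_field_def
    by (subst sum.swap) (simp add: sum_distrib_left mult.commute)
  finally show ?thesis .
qed

lemma smooth_on_differentiable:
  assumes "open U" "smooth_on U f" "z \<in> U"
  shows "f differentiable (at z)" and "partial a f differentiable (at z)"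
proof -
  have "iter_partial ds f differentiable (at z)" for ds
    using assms unfolding smooth_on_def by (meson differentiable_on_eq_differentiable_at)
  from this[of "[]"] this[of "[a]"] show "f differentiable (at z)" "partial a f differentiable (at z)"
    by simp_all
qed

lemma poisson_on_differentiable:
  assumes "open U" "poisson_on U w" "x \<in> U"
  shows "(\<lambda>z. w z $ a $ b) differentiable (at x)"
    and "partial k (\<lambda>z. w z $ a $ b) differentiable (at x)"
proof -
  have "smooth_on U (\<lambda>z. w z $ a $ b)"
    using assms(2) unfolding poisson_on_def by blast
  then show "(\<lambda>z. w z $ a $ b) differentiable (at x)"
    and "partial k (\<lambda>z. w z $ a $ b) differentiable (at x)"
    using smooth_on_differentiable[OF assms(1) _ assms(3)] by blast+
qed

lemma poisson_on_skew:
  assumes "poisson_on U w" "x \<in> U"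
  shows "w x $ a $ b = - w x $ b $ a"
  using assms unfolding poisson_on_def by blast

lemma poisson_on_partial_skew:
  assumes "open U" "poisson_on U w" "x \<in> U"
  shows "partial k (\<lambda>z. w z $ a $ b) x = - partial k (\<lambda>z. w z $ b $ a) x"
proof -
  have "eventually (\<lambda>z. w z $ a $ b = - w z $ b $ a) (nhds x)"
    using eventually_nhds_in_open[OF assms(1,3)]
    by (rule eventually_mono) (rule poisson_on_skew[OF assms(2)])
  then have "partial k (\<lambda>z. w z $ a $ b) x = partial k (\<lambda>z. - w z $ b $ a) x"
    by (rule partial_cong_ev)
  also have "\<dots> = - partial k (\<lambda>z. w z $ b $ a) x"
    using poisson_on_differentiable(1)[OF assms] by (rule partial_minus)
  finally show ?thesis .
qed

lemma riemannian_metric_det: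
  assumes "open U" "riemannian_metric_on U g" "x \<in> U"
  shows "det (g x) > 0" and "(\<lambda>z. det (g z)) differentiable (at x)"
proof -
  show "det (g x) > 0"
    using assms(2,3) by (intro det_pos_if_pos_def) (simp add: riemannian_metric_on_def)
  show "(\<lambda>z. det (g z)) differentiable (at x)"
    using smooth_on_differentiable(1)[OF assms(1) _ assms(3)] assms(2)
    by (intro differentiable_det) (simp add: riemannian_metric_on_def)
qed

lemma modular_field_sqrt_density:
  fixes w :: "real^'n::finite \<Rightarrow> real^'n^'n"
  assumes "D differentiable (at x)" "D x > 0"
  shows "modular_field w (\<lambda>z. sqrt (D z)) x =
    (\<chi> i. \<Sum>k\<in>UNIV. partial k (\<lambda>z. w z $ i $ k) x + w x $ i $ k * partial k (\<lambda>z. ln (sqrt (D z))) x)"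
  unfolding modular_field_def
  using partial_ln[OF differentiable_sqrt[OF assms]] assms(2) by simp

section \<open>The complete lift on the tangent bundle\<close>

lemma sum_UNIV_Plus:
  fixes f :: "'a::finite + 'b::finite \<Rightarrow> 'c::comm_monoid_add"
  shows "(\<Sum>a\<in>UNIV. f a) = (\<Sum>i\<in>UNIV. f (Inl i)) + (\<Sum>i\<in>UNIV. f (Inr i))"
  using sum.Plus[of "UNIV::'a set" "UNIV::'b set" f] by (simp add: UNIV_Plus_UNIV o_def)

lemma bounded_linear_xpart: "bounded_linear (xpart :: real^('n::finite + 'n) \<Rightarrow> real^'n)"
proof -
  have "linear (xpart :: real^('n + 'n) \<Rightarrow> real^'n)"
    by (rule linearI) (auto simp: xpart_def vec_eq_iff)
  then show ?thesis
    by (simp add: linear_conv_bounded_linear)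
qed

lemma open_preimage_xpart:
  assumes "open U"
  shows "open {p :: real^('n::finite + 'n). xpart p \<in> U}"
  using open_vimage[OF assms linear_continuous_on[OF bounded_linear_xpart]] by (simp add: vimage_def)

lemma xpart_axis [simp]:
  "xpart (axis (Inl k) 1 :: real^('n::finite + 'n)) = axis k 1"
  "xpart (axis (Inr k) 1 :: real^('n::finite + 'n)) = 0"
  by (auto simp: xpart_def vec_eq_iff axis_def)

lemma has_derivative_comp_xpart:
  fixes h :: "real^'n::finite \<Rightarrow> real"
  assumes "(h has_derivative H) (at (xpart p))"
  shows "((\<lambda>z. h (xpart z)) has_derivative (\<lambda>v. H (xpart v))) (at p)"
  using has_derivative_compose[OF bounded_linear_imp_has_derivative[OF bounded_linear_xpart] assms] .

lemma differentiable_comp_xpart: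
  fixes h :: "real^'n::finite \<Rightarrow> real"
  assumes "h differentiable (at (xpart p))"
  shows "(\<lambda>z. h (xpart z)) differentiable (at p)"
  using assms has_derivative_comp_xpart unfolding differentiable_def by blast

lemma partial_comp_xpart:
  fixes h :: "real^'n::finite \<Rightarrow> real"
  assumes "h differentiable (at (xpart p))"
  shows "partial (Inl k) (\<lambda>z. h (xpart z)) p = partial k h (xpart p)"
    and "partial (Inr k) (\<lambda>z. h (xpart z)) p = 0"
proof -
  obtain H where H: "(h has_derivative H) (at (xpart p))"
    using assms differentiable_def by blast
  then have "linear H"
    using has_derivative_linear by blast
  then show "partial (Inl k) (\<lambda>z. h (xpart z)) p = partial k h (xpart p)"
    and "partial (Inr k) (\<lambda>z. h (xpart z)) p = 0"
    using partial_eq_derivative[OF has_derivative_comp_xpart[OF H]] partial_eq_derivative[OF H]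
    by (simp_all add: linear_0)
qed

lemma partial_Inr_fibrewise_linear:
  fixes c :: "'n::finite \<Rightarrow> real^'n \<Rightarrow> real"
  assumes "\<And>k. c k differentiable (at (xpart p))"
  shows "partial (Inr j) (\<lambda>z. \<Sum>k\<in>UNIV. ypart z $ k * c k (xpart z)) p = c j (xpart p)"
proof -
  have diff: "(\<lambda>z. z $ Inr k * c k (xpart z)) differentiable (at p)" for k
    by (intro differentiable_mult differentiable_coordinate differentiable_comp_xpart assms)
  have "partial (Inr j) (\<lambda>z. \<Sum>k\<in>UNIV. ypart z $ k * c k (xpart z)) p
      = (\<Sum>k\<in>UNIV. (if j = k then 1 else 0) * c k (xpart p))"
    unfolding ypart_def using assms
    by (simp add: partial_sum diff partial_mult differentiable_coordinate differentiable_comp_xpart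
        partial_comp_xpart partial_coordinate)
  then show ?thesis
    by (simp add: if_distrib[of "\<lambda>t. t * _"] cong: if_cong)
qed

lemma complete_lift_nth [simp]:
  "complete_lift w p $ Inl i $ Inl j = 0"
  "complete_lift w p $ Inl i $ Inr j = w (xpart p) $ i $ j"
  "complete_lift w p $ Inr i $ Inl j = - w (xpart p) $ j $ i"
  "complete_lift w p $ Inr i $ Inr j = (\<Sum>k\<in>UNIV. ypart p $ k * partial k (\<lambda>z. w z $ i $ j) (xpart p))"
  by (simp_all add: complete_lift_def)

lemma vertical_lift_nth [simp]:
  "vertical_lift X p $ Inl i = 0"
  "vertical_lift X p $ Inr i = X (xpart p) $ i"
  by (simp_all add: vertical_lift_def)

lemma complete_lift_skew:
  fixes w :: "real^'n::finite \<Rightarrow> real^'n^'n"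
  assumes "\<And>k a b. partial k (\<lambda>z. w z $ a $ b) (xpart p) = - partial k (\<lambda>z. w z $ b $ a) (xpart p)"
  shows "complete_lift w p $ a $ b = - complete_lift w p $ b $ a"
proof (cases a; cases b)
  fix i j assume "a = Inr i" "b = Inr j"
  then show ?thesis
    using assms[of _ i j] by (simp add: sum_negf[symmetric])
qed simp_all

lemma complete_lift_differentiable:
  fixes w :: "real^'n::finite \<Rightarrow> real^'n^'n"
  assumes "\<And>a b. (\<lambda>z. w z $ a $ b) differentiable (at (xpart p))"
    and "\<And>k a b. partial k (\<lambda>z. w z $ a $ b) differentiable (at (xpart p))"
  shows "(\<lambda>q. complete_lift w q $ a $ b) differentiable (at p)"
  using assms
  by (cases a; cases b)
    (auto simp: ypart_def intro!: differentiable_minus differentiable_comp_xpart differentiable_sum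
      differentiable_mult differentiable_coordinate)

lemma modular_field_complete_lift:
  fixes w :: "real^'n::finite \<Rightarrow> real^'n^'n"
  assumes skew: "\<And>a b. w (xpart p) $ a $ b = - w (xpart p) $ b $ a"
    and partial_skew: "\<And>k a b. partial k (\<lambda>z. w z $ a $ b) (xpart p) = - partial k (\<lambda>z. w z $ b $ a) (xpart p)"
    and w_diff: "\<And>a b. (\<lambda>z. w z $ a $ b) differentiable (at (xpart p))"
    and dw_diff: "\<And>k a b. partial k (\<lambda>z. w z $ a $ b) differentiable (at (xpart p))"
    and D_diff: "D differentiable (at (xpart p))" and D_pos: "D (xpart p) > 0"
  shows "modular_field (complete_lift w) (\<lambda>q. D (xpart q)) p =
    2 *\<^sub>R vertical_lift (modular_field w (\<lambda>x. sqrt (D x))) p"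
proof -
  let ?x = "xpart p"
  have w_pullback: "(\<lambda>z. w (xpart z) $ a $ b) differentiable (at p)"
    "partial (Inl j) (\<lambda>z. w (xpart z) $ a $ b) p = partial j (\<lambda>z. w z $ a $ b) ?x"
    "partial (Inr j) (\<lambda>z. w (xpart z) $ a $ b) p = 0" for j a b
    using differentiable_comp_xpart[of "\<lambda>z. w z $ a $ b"] partial_comp_xpart[of "\<lambda>z. w z $ a $ b"] w_diff
    by simp_all
  have fibre: "partial (Inr j) (\<lambda>z. \<Sum>k\<in>UNIV. ypart z $ k * partial k (\<lambda>z. w z $ i $ j) (xpart z)) p
      = partial j (\<lambda>z. w z $ i $ j) ?x" for i j
    using partial_Inr_fibrewise_linear[of "\<lambda>k. partial k (\<lambda>z. w z $ i $ j)"] dw_diff by simp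
  have sqrt_ratio: "c * partial j (\<lambda>x. sqrt (D x)) ?x / sqrt (D ?x) = c * partial j D ?x / (2 * D ?x)" for c j
    using partial_sqrt_div_sqrt[OF D_diff D_pos, of j] by (metis times_divide_eq_right)
  have horizontal: "modular_field (complete_lift w) (\<lambda>q. D (xpart q)) p $ Inl i = 0" for i
    unfolding modular_field_def
    by (simp add: sum_UNIV_Plus partial_const w_pullback partial_comp_xpart D_diff)
  have vertical: "modular_field (complete_lift w) (\<lambda>q. D (xpart q)) p $ Inr i
      = 2 * (\<Sum>j\<in>UNIV. partial j (\<lambda>z. w z $ i $ j) ?x + w ?x $ i $ j * (partial j D ?x / (2 * D ?x)))" for i
  proof -
    have "modular_field (complete_lift w) (\<lambda>q. D (xpart q)) p $ Inr i
        = (\<Sum>j\<in>UNIV. - partial j (\<lambda>z. w z $ j $ i) ?x - w ?x $ j $ i * partial j D ?x / D ?x)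
          + (\<Sum>j\<in>UNIV. partial j (\<lambda>z. w z $ i $ j) ?x)"
      unfolding modular_field_def
      by (simp add: sum_UNIV_Plus partial_minus w_pullback fibre partial_comp_xpart D_diff)
    also have "\<dots> = (\<Sum>j\<in>UNIV. partial j (\<lambda>z. w z $ i $ j) ?x + w ?x $ i $ j * partial j D ?x / D ?x)
          + (\<Sum>j\<in>UNIV. partial j (\<lambda>z. w z $ i $ j) ?x)"
      by (simp add: skew[of _ i] partial_skew[of _ _ i])
    also have "\<dots> = (\<Sum>j\<in>UNIV. 2 * (partial j (\<lambda>z. w z $ i $ j) ?x + w ?x $ i $ j * (partial j D ?x / (2 * D ?x))))"
      unfolding sum.distrib[symmetric] by (intro sum.cong refl) (simp add: field_simps)
    finally show ?thesis
      by (simp add: sum_distrib_left)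
  qed
  show ?thesis
    unfolding vec_eq_iff
  proof
    fix a
    show "modular_field (complete_lift w) (\<lambda>q. D (xpart q)) p $ a
        = (2 *\<^sub>R vertical_lift (modular_field w (\<lambda>x. sqrt (D x))) p) $ a"
      by (cases a) (simp_all add: horizontal vertical modular_field_def[of w] sqrt_ratio)
  qed
qed

lemma modular_vf_sqrt_det:
  assumes U: "open U" and w: "poisson_on U w" and g: "riemannian_metric_on U g"
    and f: "smooth_on U f" and x: "x \<in> U"
  shows "modular_vf w (\<lambda>x. sqrt (det (g x))) f x
    = vf_apply (modular_field w (\<lambda>x. sqrt (det (g x)))) f x"
  using riemannian_metric_det(1)[OF U g x]
  by (intro modular_vf_eq_vf_apply[OF U x poisson_on_skew[OF w x] poisson_on_differentiable(1)[OF U w x]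
      differentiable_sqrt[OF riemannian_metric_det(2,1)[OF U g x]] _
      smooth_on_differentiable(1)[OF U f] smooth_on_differentiable(2)[OF U f x]]) simp_all

lemma modular_vf_complete_lift_det:
  fixes U :: "(real^'n::finite) set"
  assumes U: "open U" and w: "poisson_on U w" and g: "riemannian_metric_on U g"
    and F: "smooth_on {p. xpart p \<in> U} F" and x: "xpart p \<in> U"
  shows "modular_vf (complete_lift w) (\<lambda>p. det (g (xpart p))) F p
    = vf_apply (\<lambda>q. 2 *\<^sub>R vertical_lift (modular_field w (\<lambda>x. sqrt (det (g x)))) q) F p"
proof -
  have TU: "open {p :: real^('n + 'n). xpart p \<in> U}" and p: "p \<in> {p. xpart p \<in> U}"
    using open_preimage_xpart[OF U] x by auto
  note skew = poisson_on_skew[OF w x] and partial_skew = poisson_on_partial_skew[OF U w x]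
    and w_diff = poisson_on_differentiable[OF U w x] and det_g = riemannian_metric_det[OF U g x]
  have "modular_vf (complete_lift w) (\<lambda>p. det (g (xpart p))) F p
      = vf_apply (modular_field (complete_lift w) (\<lambda>p. det (g (xpart p)))) F p"
    using det_g(1)
    by (intro modular_vf_eq_vf_apply[OF TU p complete_lift_skew[OF partial_skew]
        complete_lift_differentiable[OF w_diff] differentiable_comp_xpart[OF det_g(2)] _
        smooth_on_differentiable(1)[OF TU F] smooth_on_differentiable(2)[OF TU F p]]) simp_all
  also have "\<dots> = vf_apply (\<lambda>q. 2 *\<^sub>R vertical_lift (modular_field w (\<lambda>x. sqrt (det (g x)))) q) F p"
    by (intro vf_apply_cong modular_field_complete_lift[OF skew partial_skew w_diff det_g(2,1)])
  finally show ?thesis .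
qed

theorem proposition1p7:
  fixes U :: "(real^'n::finite) set"
    and w :: "real^'n \<Rightarrow> real^'n^'n"
    and g :: "real^'n \<Rightarrow> real^'n^'n"
  assumes "open U"
    and "poisson_on U w"
    and "riemannian_metric_on U g"
  defines "TU \<equiv> {p :: real^('n + 'n). xpart p \<in> U}"
    and "dVg \<equiv> (\<lambda>x. sqrt (det (g x)))"
    and "Phi \<equiv> (\<lambda>p. det (g (xpart p)))"
    and "DeltaM \<equiv> (\<lambda>x. \<chi> i. \<Sum>k\<in>UNIV. partial k (\<lambda>z. w z $ i $ k) x
                     + w x $ i $ k * partial k (\<lambda>z. ln (sqrt (det (g z)))) x)"
  shows "(\<forall>f x. smooth_on U f \<and> x \<in> U \<longrightarrow> modular_vf w dVg f x = vf_apply DeltaM f x)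
       \<and> (\<forall>F p. smooth_on TU F \<and> p \<in> TU \<longrightarrow>
            modular_vf (complete_lift w) Phi F p = vf_apply (\<lambda>q. 2 *\<^sub>R vertical_lift DeltaM q) F p)"
proof -
  have DeltaM: "DeltaM x = modular_field w dVg x" if "x \<in> U" for x
    unfolding DeltaM_def dVg_def
    using modular_field_sqrt_density[OF riemannian_metric_det(2,1)[OF assms(1,3) that]] by simp
  show ?thesis
  proof (intro conjI allI impI)
    fix f x assume "smooth_on U f \<and> x \<in> U"
    then have "modular_vf w dVg f x = vf_apply (modular_field w dVg) f x" and "x \<in> U"
      unfolding dVg_def using modular_vf_sqrt_det[OF assms(1-3)] by auto
    then show "modular_vf w dVg f x = vf_apply DeltaM f x"
      by (simp add: vf_apply_def DeltaM)
  next
    fix F p assume "smooth_on TU F \<and> p \<in> TU"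
    then have "smooth_on TU F" "xpart p \<in> U"
      by (auto simp: TU_def)
    then show "modular_vf (complete_lift w) Phi F p = vf_apply (\<lambda>q. 2 *\<^sub>R vertical_lift DeltaM q) F p"
      unfolding Phi_def TU_def using modular_vf_complete_lift_det[OF assms(1-3)]
      by (simp add: vf_apply_def vertical_lift_def DeltaM dVg_def)
  qed
qed

end
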